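(* For all positive integers $h$ and $k$, \[ n^{\sharp}_h(k)=m^{\sharp}_h(k). \]
   Context: For integers $a<b$, $[a,b]=\{j\in\mathbf{Z}: a\le j\le b\}$ is an interval of integers. $hA=\{a_1+\cdots+a_h: a_i\in A\}$ (summands not necessarily distinct). For a nonempty finite $A\subseteq\mathbf{Z}$, $\ell^{\sharp}_h(A)$ is the largest integer $n\ge1$ with $[c,c+n]\subseteq hA$ for some $c\in\mathbf{Z}$ (undefined if $hA$ contains no interval). With $\mathcal{A}_X(k)=\{A\subseteq X:|A|=k\}$ and $\mathbf{N}_0=\{0,1,2,\ldots\}$: $n^{\sharp}_h(k)=\max\{\ell^{\sharp}_h(A):A\in\mathcal{A}_{\mathbf{N}_0}(k)\}$ and $m^{\sharp}_h(k)=\max\{\ell^{\sharp}_h(A):A\in\mathcal{A}_{\mathbf{Z}}(k)\}$, maxima taken over sets for which $\ell^{\sharp}_h(A)$ is defined. *)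

theory Defs
  imports Main
begin

fun sumset :: "nat \<Rightarrow> int set \<Rightarrow> int set" where
  "sumset 0 A = {0}"
| "sumset (Suc h) A = {a + s | a s. a \<in> A \<and> s \<in> sumset h A}"

definition interval_lengths :: "nat \<Rightarrow> int set \<Rightarrow> nat set" where
  "interval_lengths h A = {n. n \<ge> 1 \<and> (\<exists>c::int. {c..c + int n} \<subseteq> sumset h A)}"

definition has_interval :: "nat \<Rightarrow> int set \<Rightarrow> bool" where
  "has_interval h A \<longleftrightarrow> interval_lengths h A \<noteq> {}"

text \<open>ell^sharp_h(A): only meaningful when has_interval h A.\<close>
definition ell_sharp :: "nat \<Rightarrow> int set \<Rightarrow> nat" where
  "ell_sharp h A = Max (interval_lengths h A)"

definition n_sharp :: "nat \<Rightarrow> nat \<Rightarrow> nat" where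
  "n_sharp h k = Max {ell_sharp h A | A. (\<forall>a\<in>A. a \<ge> 0) \<and> finite A \<and> card A = k \<and> has_interval h A}"

definition m_sharp :: "nat \<Rightarrow> nat \<Rightarrow> nat" where
  "m_sharp h k = Max {ell_sharp h A | A. finite A \<and> card A = k \<and> has_interval h A}"

end

theory Submission
  imports Defs
begin

text \<open>Translating A by t translates hA by h t, so it changes neither the lengths of the
  intervals contained in hA nor the cardinality of A. Every finite set of integers is a translate
  of a set of nonnegative integers (shift its minimum to 0), so both maxima range over the same set
  of values.\<close>

lemma mem_sumset_translate:
  "x \<in> sumset h ((\<lambda>a. a + t) ` A) \<longleftrightarrow> x - int h * t \<in> sumset h A"
proof (induction h arbitrary: x)
  case 0
  then show ?case by simp
next
  case (Suc h)
  have "x \<in> sumset (Suc h) ((\<lambda>a. a + t) ` A) \<longleftrightarrow> (\<exists>a\<in>A. x - (a + t) - int h * t \<in> sumset h A)"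
    using Suc.IH by force
  also have "\<dots> \<longleftrightarrow> x - int (Suc h) * t \<in> sumset (Suc h) A"
    by (force simp: algebra_simps)
  finally show ?case .
qed

lemma sumset_translate:
  "sumset h ((\<lambda>a. a + t) ` A) = (\<lambda>x. x + int h * t) ` sumset h A"
  by (force simp: mem_sumset_translate)

lemma interval_lengths_translate:
  "interval_lengths h ((\<lambda>a. a + t) ` A) = interval_lengths h A"
proof -
  let ?d = "int h * t"
  have "{c..c + int n} \<subseteq> (\<lambda>x. x + ?d) ` sumset h A \<longleftrightarrow>
        {c - ?d..c - ?d + int n} \<subseteq> sumset h A" for c n
  proof -
    have interval: "{c..c + int n} = (\<lambda>x. x + ?d) ` {c - ?d..c - ?d + int n}"
      by simp
    have "inj (\<lambda>x. x + ?d)"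
      by (simp add: inj_def)
    then show ?thesis
      unfolding interval by (rule inj_image_subset_iff)
  qed
  then have "(\<exists>c. {c..c + int n} \<subseteq> (\<lambda>x. x + ?d) ` sumset h A) \<longleftrightarrow>
             (\<exists>c. {c..c + int n} \<subseteq> sumset h A)" for n
    by (metis add_diff_cancel_right')
  then show ?thesis
    unfolding interval_lengths_def sumset_translate by simp
qed

lemma has_interval_translate: "has_interval h ((\<lambda>a. a + t) ` A) = has_interval h A"
  by (simp add: has_interval_def interval_lengths_translate)

lemma ell_sharp_translate: "ell_sharp h ((\<lambda>a. a + t) ` A) = ell_sharp h A"
  by (simp add: ell_sharp_def interval_lengths_translate)

lemma translate_to_nonneg:
  fixes A :: "int set"
  assumes "finite A"
  obtains t where "\<forall>b \<in> (\<lambda>a. a + t) ` A. b \<ge> 0" "finite ((\<lambda>a. a + t) ` A)"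
    "card ((\<lambda>a. a + t) ` A) = card A"
proof
  show "\<forall>b \<in> (\<lambda>a. a + - Min A) ` A. b \<ge> 0"
    using assms by simp
qed (use assms in \<open>simp_all add: card_image\<close>)

theorem mainTheorem6:
  fixes h k :: nat
  assumes "h \<ge> 1" and "k \<ge> 1"
  shows "n_sharp h k = m_sharp h k"
proof -
  let ?N = "{ell_sharp h A | A. (\<forall>a\<in>A. a \<ge> 0) \<and> finite A \<and> card A = k \<and> has_interval h A}"
  let ?M = "{ell_sharp h A | A. finite A \<and> card A = k \<and> has_interval h A}"
  have "ell_sharp h A \<in> ?N" if "finite A" "card A = k" "has_interval h A" for A
  proof -
    obtain t where "\<forall>b \<in> (\<lambda>a. a + t) ` A. b \<ge> 0" "finite ((\<lambda>a. a + t) ` A)"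
      "card ((\<lambda>a. a + t) ` A) = k"
      using translate_to_nonneg \<open>finite A\<close> \<open>card A = k\<close> by metis
    moreover have "has_interval h ((\<lambda>a. a + t) ` A)"
      using \<open>has_interval h A\<close> by (simp only: has_interval_translate)
    ultimately have "ell_sharp h ((\<lambda>a. a + t) ` A) \<in> ?N"
      by blast
    then show ?thesis
      by (simp only: ell_sharp_translate)
  qed
  then have "?N = ?M"
    by blast
  then show ?thesis
    unfolding n_sharp_def m_sharp_def by simp
qed

end
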